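(* Let $n\in\mathbb N$ and $b=n^2+1$. Then for every $m\in\{2,3,\dots,n\}$, the number $(m\cdot n)^2$ is antipalindromic in base $b$.
   Context: For an integer $b\ge 2$, every natural number $x$ has a unique base-$b$ expansion $x=a_\ell b^\ell+\dots+a_1b+a_0$ with $a_0,\dots,a_\ell\in\{0,1,\dots,b-1\}$ and $a_\ell\neq 0$. The number $x$ is antipalindromic in base $b$ if $a_j=b-1-a_{\ell-j}$ for all $j\in\{0,1,\dots,\ell\}$. *)

theory Defs
  imports Main
begin

definition is_base_expansion :: "nat \<Rightarrow> nat \<Rightarrow> nat \<Rightarrow> (nat \<Rightarrow> nat) \<Rightarrow> bool" where
  "is_base_expansion b x l a \<longleftrightarrow>
     (\<forall>j\<le>l. a j < b) \<and> a l \<noteq> 0 \<and> x = (\<Sum>j\<le>l. a j * b ^ j)"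

definition antipalindromic :: "nat \<Rightarrow> nat \<Rightarrow> bool" where
  "antipalindromic b x \<longleftrightarrow>
     (\<exists>l a. is_base_expansion b x l a \<and> (\<forall>j\<le>l. a j = b - 1 - a (l - j)))"

end

theory Submission
  imports Defs
begin

text \<open>Since b - 1 = n^2, the number (m n)^2 = m^2 (b - 1) is a multiple k (b - 1) with
  2 \<le> k \<le> b. Any such multiple equals (k - 1) b + (b - k): two digits adding up to b - 1.\<close>

lemma antipalindromic_two_digits:
  fixes b c d :: nat
  assumes "0 < c" and "c + d + 1 = b"
  shows "antipalindromic b (c * b + d)"
proof -
  define a where "a = (\<lambda>j::nat. if j = 0 then d else c)"
  have "(\<Sum>j\<le>1. a j * b ^ j) = c * b + d"
    by (simp add: a_def atMost_Suc)
  then have "is_base_expansion b (c * b + d) 1 a"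
    using assms by (auto simp: is_base_expansion_def a_def)
  moreover have "\<forall>j\<le>1. a j = b - 1 - a (1 - j)"
    using assms by (auto simp: a_def le_Suc_eq)
  ultimately show ?thesis
    unfolding antipalindromic_def by blast
qed

lemma antipalindromic_mult_pred:
  fixes b k :: nat
  assumes "2 \<le> k" and "k \<le> b"
  shows "antipalindromic b (k * (b - 1))"
proof -
  obtain c d where k: "k = c + 2" and b: "b = c + 2 + d"
    using assms by (metis add.commute le_Suc_ex)
  have "k * (b - 1) = (k - 1) * b + (b - k)"
    unfolding k b by (simp add: algebra_simps)
  moreover have "antipalindromic b ((k - 1) * b + (b - k))"
    by (rule antipalindromic_two_digits) (use assms in auto)
  ultimately show ?thesis
    by simp
qed

theorem mainTheorem10:
  fixes n m b :: nat
  assumes "b = n\<^sup>2 + 1"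
    and "m \<in> {2..n}"
  shows "antipalindromic b ((m * n)\<^sup>2)"
proof -
  have m: "2 \<le> m" "m \<le> n"
    using assms(2) by auto
  have "2 \<le> m\<^sup>2"
    using mult_le_mono[OF m(1) m(1)] by (simp add: power2_eq_square)
  moreover have "m\<^sup>2 \<le> b"
    using assms(1) mult_le_mono[OF m(2) m(2)] by (simp add: power2_eq_square)
  ultimately have "antipalindromic b (m\<^sup>2 * (b - 1))"
    by (rule antipalindromic_mult_pred)
  then show ?thesis
    using assms(1) by (simp add: power_mult_distrib)
qed

end
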